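(* For every state $(s,t)$ and price $p\in[p_l,p_h]$, \[ \big\|\widehat P_n(\cdot\mid s,p)-\widetilde P_n(\cdot\mid s,p)\big\|_1\le\frac{|\mu_n(p)-h(p)|}{\sigma_n(p)}. \]
   Context: Let $s\in\{0,1,\dots,C\}$ and $p\in[p_l,p_h]$. Let $\mu_n(p)\in\mathbb{R}$ and $\sigma_n(p)>0$ be the posterior mean and standard deviation of a Gaussian process demand model in season $n$, and $h(p)\in\mathbb{R}$ the true expected demand at price $p$. Define intervals $I_0=(-\infty,\tfrac12)$, $I_q=[q-\tfrac12,q+\tfrac12]$ for $0<q<s$, $I_s=[s-\tfrac12,\infty)$ (when $s=0$, $I_0=\mathbb{R}$), and for $q\in\{0,\dots,s\}$ \[ \widehat P_n(q\mid s,p)=\int_{I_q}\mathcal{N}(y;\mu_n(p),\sigma_n^2(p))\,dy,\qquad \widetilde P_n(q\mid s,p)=\int_{I_q}\mathcal{N}(y;h(p),\sigma_n^2(p))\,dy, \] i.e. Gaussian mass in unit bins around integers, with all mass outside $[-\tfrac12,s+\tfrac12)$ assigned to the endpoints $q=0$ or $q=s$. $\|\cdot\|_1$ is the $\ell_1$ norm over $q\in\{0,\dots,s\}$. *)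

theory Defs
  imports "HOL-Probability.Probability"
begin

definition bin :: "nat \<Rightarrow> nat \<Rightarrow> real set" where
  "bin s q =
     (if s = 0 then UNIV
      else if q = 0 then {..<1/2}
      else if q = s then {real s - 1/2..}
      else {real q - 1/2 .. real q + 1/2})"

definition Pbin :: "real \<Rightarrow> real \<Rightarrow> nat \<Rightarrow> nat \<Rightarrow> real" where
  "Pbin m sd s q = (LINT y:bin s q|lborel. normal_density m sd y)"

end

theory Submission
  imports Defs
begin

text \<open>For \<open>a \<le> b\<close> the difference of the Gaussian densities \<open>\<phi>\<^sub>a - \<phi>\<^sub>b\<close> is nonnegative left
  of the midpoint \<open>(a + b) / 2\<close>, nonpositive right of it, and integrates to 0, so its \<open>L\<^sup>1\<close> norm is
  twice its integral over \<open>(-\<infinity>, (a + b) / 2)\<close>. Since \<open>\<phi>\<^sub>b\<close> is \<open>\<phi>\<^sub>a\<close> translated by \<open>b - a\<close>,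
  that integral is the \<open>\<phi>\<^sub>a\<close>-mass of an interval of length \<open>b - a\<close>, at most
  \<open>(b - a) / (\<sigma> sqrt (2 \<pi>))\<close>. The bins overlap only in null sets, so the \<open>\<ell>\<^sup>1\<close> distance of the
  binned masses is bounded by the \<open>L\<^sup>1\<close> norm, \<open>2 \<bar>a - b\<bar> / (\<sigma> sqrt (2 \<pi>)) \<le> \<bar>a - b\<bar> / \<sigma>\<close>.\<close>

lemma sum_abs_set_integral_le_integral_abs:
  fixes f :: "'a \<Rightarrow> real"
  assumes "finite I"
    and "\<And>i j. i \<in> I \<Longrightarrow> j \<in> I \<Longrightarrow> AE x in M. x \<in> A i \<and> x \<in> A j \<longrightarrow> i = j"
    and sets: "\<And>i. i \<in> I \<Longrightarrow> A i \<in> sets M"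
    and f: "integrable M f"
  shows "(\<Sum>i\<in>I. \<bar>LINT x:A i|M. f x\<bar>) \<le> (\<integral>x. \<bar>f x\<bar> \<partial>M)"
proof -
  have f_on: "set_integrable M (A i) f" if "i \<in> I" for i
    using integrable_mult_indicator[OF sets[OF that] f] by (simp add: set_integrable_def)
  have "(\<Sum>i\<in>I. \<bar>LINT x:A i|M. f x\<bar>) \<le> (\<Sum>i\<in>I. LINT x:A i|M. \<bar>f x\<bar>)"
    using set_integral_norm_bound[OF f_on] by (intro sum_mono) simp
  also have "\<dots> = (LINT x:(\<Union>i\<in>I. A i)|M. \<bar>f x\<bar>)"
    using assms f_on by (intro set_integral_finite_UN_AE[symmetric] set_integrable_abs) auto
  also have "\<dots> \<le> (\<integral>x. \<bar>f x\<bar> \<partial>M)"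
    unfolding set_lebesgue_integral_def using assms f
    by (intro integral_mono integrable_mult_indicator integrable_abs) (auto split: split_indicator)
  finally show ?thesis .
qed

lemma bin_borel [simp]: "bin s q \<in> sets borel"
  by (simp add: bin_def)

lemma bin_subset_atLeast: "0 < q \<Longrightarrow> q \<le> s \<Longrightarrow> bin s q \<subseteq> {real q - 1/2..}"
  by (auto simp: bin_def)

lemma bin_subset_atMost: "q < s \<Longrightarrow> bin s q \<subseteq> {..real q + 1/2}"
  by (auto simp: bin_def)

lemma bin_inter_subset: "i < j \<Longrightarrow> j \<le> s \<Longrightarrow> bin s i \<inter> bin s j \<subseteq> {real i + 1/2}"
  using bin_subset_atMost[of i s] bin_subset_atLeast[of j s] by fastforce

lemma AE_bin_disjoint:
  assumes "i \<le> s" "j \<le> s"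
  shows "AE y in lborel. y \<in> bin s i \<and> y \<in> bin s j \<longrightarrow> i = j"
proof (cases i j rule: linorder_cases)
  case less
  with assms show ?thesis
    using bin_inter_subset[of i j s] by (auto intro: eventually_mono[OF AE_lborel_singleton])
next
  case greater
  with assms show ?thesis
    using bin_inter_subset[of j i s] by (auto intro: eventually_mono[OF AE_lborel_singleton])
qed simp

lemma normal_density_le_iff:
  assumes "sd \<noteq> 0"
  shows "normal_density a sd y \<le> normal_density b sd y \<longleftrightarrow> \<bar>y - b\<bar> \<le> \<bar>y - a\<bar>"
proof -
  have "\<not> pi * sd\<^sup>2 < 0"
    by (simp add: not_less)
  then have "normal_density a sd y \<le> normal_density b sd y \<longleftrightarrow> (y - b)\<^sup>2 \<le> (y - a)\<^sup>2"
    using assms by (simp add: normal_density_def divide_le_cancel)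
  also have "\<dots> \<longleftrightarrow> \<bar>y - b\<bar> \<le> \<bar>y - a\<bar>"
    by (simp add: abs_le_square_iff)
  finally show ?thesis .
qed

lemma normal_density_le: "0 < sd \<Longrightarrow> normal_density m sd y \<le> 1 / (sqrt (2 * pi) * sd)"
  by (simp add: normal_density_def real_sqrt_mult divide_le_eq)

lemma set_integrable_normal_density:
  "0 < sd \<Longrightarrow> A \<in> sets lborel \<Longrightarrow> set_integrable lborel A (normal_density m sd)"
  using integrable_mult_indicator[of A lborel "normal_density m sd"]
  by (simp add: set_integrable_def)

lemma set_integral_normal_density_diff_le:
  assumes "0 < sd" "a \<le> b"
  shows "(LINT y:{..<t}|lborel. normal_density a sd y - normal_density b sd y)
           \<le> (b - a) / (sqrt (2 * pi) * sd)"
proof -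
  let ?\<phi> = "normal_density a sd" and ?l = "t - (b - a)"
  note integrable = set_integrable_normal_density[OF assms(1)]
  have "(LINT y:{..<t}|lborel. normal_density b sd y)
          = (\<integral>x. indicator {..<t} ((b - a) + 1 * x) *\<^sub>R normal_density b sd ((b - a) + 1 * x) \<partial>lborel)"
    using lborel_integral_real_affine[of 1 "\<lambda>y. indicator {..<t} y *\<^sub>R normal_density b sd y" "b - a"]
    by (simp add: set_lebesgue_integral_def)
  also have "\<dots> = (LINT y:{..<?l}|lborel. ?\<phi> y)"
    unfolding set_lebesgue_integral_def
    by (intro Bochner_Integration.integral_cong) (auto simp: normal_density_def indicator_def)
  finally have shift: "(LINT y:{..<t}|lborel. normal_density b sd y) = (LINT y:{..<?l}|lborel. ?\<phi> y)" .
  have "{..<t} = {..<?l} \<union> {?l..<t}"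
    using assms by auto
  moreover have "(LINT y:{..<?l} \<union> {?l..<t}|lborel. ?\<phi> y)
                   = (LINT y:{..<?l}|lborel. ?\<phi> y) + (LINT y:{?l..<t}|lborel. ?\<phi> y)"
    by (intro set_integral_Un integrable) auto
  ultimately have "(LINT y:{..<t}|lborel. ?\<phi> y)
                     = (LINT y:{..<?l}|lborel. ?\<phi> y) + (LINT y:{?l..<t}|lborel. ?\<phi> y)"
    by simp
  then have "(LINT y:{..<t}|lborel. ?\<phi> y - normal_density b sd y) = (LINT y:{?l..<t}|lborel. ?\<phi> y)"
    using set_integral_diff(2)[OF integrable integrable, of "{..<t}" a b] by (simp add: shift)
  also have "\<dots> \<le> (LINT y:{?l..<t}|lborel. 1 / (sqrt (2 * pi) * sd))"
    using assms normal_density_le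
    by (intro set_integral_mono integrable) (auto simp: set_integrable_def)
  also have "\<dots> = (b - a) / (sqrt (2 * pi) * sd)"
    using assms by (simp add: set_integral_const)
  finally show ?thesis .
qed

lemma integral_abs_normal_density_diff:
  assumes "0 < sd" "a \<le> b"
  defines "d \<equiv> \<lambda>y. normal_density a sd y - normal_density b sd y"
  shows "(\<integral>y. \<bar>d y\<bar> \<partial>lborel) = 2 * (LINT y:{..<(a + b) / 2}|lborel. d y)"
proof -
  let ?c = "(a + b) / 2"
  have d: "integrable lborel d"
    using assms unfolding d_def by auto
  have "normal_density b sd y \<le> normal_density a sd y" if "y < ?c" for y
    using that assms by (subst normal_density_le_iff) auto
  moreover have "normal_density a sd y \<le> normal_density b sd y" if "\<not> y < ?c" for y
    using that assms by (subst normal_density_le_iff) auto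
  ultimately have "\<bar>d y\<bar> = 2 * (indicator {..<?c} y * d y) - d y" for y
    unfolding d_def by (cases "y < ?c") auto
  then have "(\<integral>y. \<bar>d y\<bar> \<partial>lborel) = 2 * (LINT y:{..<?c}|lborel. d y) - (\<integral>y. d y \<partial>lborel)"
    using d by (simp add: set_lebesgue_integral_def integrable_real_mult_indicator mult.commute)
  moreover have "(\<integral>y. d y \<partial>lborel) = 0"
    using assms unfolding d_def by (simp add: integral_normal_density)
  ultimately show ?thesis
    by simp
qed

lemma integral_abs_normal_density_diff_le:
  assumes "0 < sd"
  shows "(\<integral>y. \<bar>normal_density a sd y - normal_density b sd y\<bar> \<partial>lborel)
           \<le> 2 * \<bar>a - b\<bar> / (sqrt (2 * pi) * sd)"
proof -
  have ordered: "(\<integral>y. \<bar>normal_density a sd y - normal_density b sd y\<bar> \<partial>lborel)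
                   \<le> 2 * \<bar>a - b\<bar> / (sqrt (2 * pi) * sd)" if le: "a \<le> b" for a b
  proof -
    have "(\<integral>y. \<bar>normal_density a sd y - normal_density b sd y\<bar> \<partial>lborel)
            = 2 * (LINT y:{..<(a + b) / 2}|lborel. normal_density a sd y - normal_density b sd y)"
      using assms le by (rule integral_abs_normal_density_diff)
    also have "\<dots> \<le> 2 * ((b - a) / (sqrt (2 * pi) * sd))"
      by (intro mult_left_mono set_integral_normal_density_diff_le assms le) simp
    also have "\<dots> = 2 * \<bar>a - b\<bar> / (sqrt (2 * pi) * sd)"
      using le by simp
    finally show ?thesis .
  qed
  show ?thesis
    using ordered[of a b] ordered[of b a] by (cases "a \<le> b") (simp_all only: abs_minus_commute)
qed

lemma sum_abs_Pbin_diff_le: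
  assumes "0 < sd"
  shows "(\<Sum>q\<le>s. \<bar>Pbin a sd s q - Pbin b sd s q\<bar>) \<le> \<bar>a - b\<bar> / sd"
proof -
  let ?d = "\<lambda>y. normal_density a sd y - normal_density b sd y"
  have "Pbin a sd s q - Pbin b sd s q = (LINT y:bin s q|lborel. ?d y)" for q
    unfolding Pbin_def
    by (intro set_integral_diff(2)[symmetric] set_integrable_normal_density assms) simp_all
  then have "(\<Sum>q\<le>s. \<bar>Pbin a sd s q - Pbin b sd s q\<bar>) = (\<Sum>q\<le>s. \<bar>LINT y:bin s q|lborel. ?d y\<bar>)"
    by simp
  also have "\<dots> \<le> (\<integral>y. \<bar>?d y\<bar> \<partial>lborel)"
    using assms by (intro sum_abs_set_integral_le_integral_abs AE_bin_disjoint) auto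
  also have "\<dots> \<le> 2 * \<bar>a - b\<bar> / (sqrt (2 * pi) * sd)"
    using assms by (rule integral_abs_normal_density_diff_le)
  also have "\<dots> \<le> \<bar>a - b\<bar> / sd"
  proof -
    have "2 \<le> sqrt (2 * pi)"
      using pi_gt3 by (simp add: real_le_rsqrt)
    then show ?thesis
      using assms mult_left_mono[of 2 "sqrt (2 * pi)" "\<bar>a - b\<bar>"]
      by (simp add: divide_simps mult.commute)
  qed
  finally show ?thesis .
qed

theorem lemma5:
  fixes mu sigma :: "nat \<Rightarrow> real \<Rightarrow> real" and h :: "real \<Rightarrow> real"
    and n s C :: nat and p p_l p_h :: real
  assumes "s \<le> C" and "p \<in> {p_l..p_h}" and "sigma n p > 0"
  shows "(\<Sum>q\<le>s. \<bar>Pbin (mu n p) (sigma n p) s q - Pbin (h p) (sigma n p) s q\<bar>)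
           \<le> \<bar>mu n p - h p\<bar> / sigma n p"
  using assms(3) by (rule sum_abs_Pbin_diff_le)

end
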